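(* Let $k\ge2$. Then $\mathfrak a_kL_{k-1}=L_k\mathfrak a_k$ as operators $\mathbb R^{\Xi_{k-1}}\to\mathbb R^{\Xi_k}$.
   Context: $V$ is a finite set with symmetric non-negative weights $c_{xy}=c_{yx}\ge0$, $\alpha=(\alpha_x)$ positive. $\Xi_m:=\{\eta\in\mathbb N_0^V:\sum_x\eta_x=m\}$. $L_mf(\eta)=\sum_x\eta_x\sum_yc_{xy}(\alpha_y+\eta_y)(f(\eta-\delta_x+\delta_y)-f(\eta))$ for $f:\Xi_m\to\mathbb R$, where $\eta-\delta_x+\delta_y$ moves one particle from $x$ to $y$. $\mathfrak a_k g(\eta)=\sum_x\eta_x g(\eta-\delta_x)$ for $g:\Xi_{k-1}\to\mathbb R$, $\eta\in\Xi_k$. *)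

theory Defs
  imports Complex_Main
begin

text \<open>Vertex set V is the finite type 'v. Configurations are functions 'v => nat.\<close>

definition Xi :: "nat \<Rightarrow> ('v::finite \<Rightarrow> nat) set" where
  "Xi m = {\<eta>. (\<Sum>x\<in>UNIV. \<eta> x) = m}"

text \<open>eta - delta_x (only used where eta x >= 1, otherwise multiplied by eta x = 0)\<close>
definition remove_particle :: "('v \<Rightarrow> nat) \<Rightarrow> 'v \<Rightarrow> ('v \<Rightarrow> nat)" where
  "remove_particle \<eta> x = (\<lambda>z. \<eta> z - (if z = x then 1 else 0))"

definition move_particle :: "('v \<Rightarrow> nat) \<Rightarrow> 'v \<Rightarrow> 'v \<Rightarrow> ('v \<Rightarrow> nat)" where
  "move_particle \<eta> x y = (\<lambda>z. \<eta> z - (if z = x then 1 else 0) + (if z = y then 1 else 0))"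

text \<open>Generator L_m (the formula does not depend on m; it is applied on Xi m).\<close>
definition gen :: "('v::finite \<Rightarrow> 'v \<Rightarrow> real) \<Rightarrow> ('v \<Rightarrow> real)
    \<Rightarrow> (('v \<Rightarrow> nat) \<Rightarrow> real) \<Rightarrow> ('v \<Rightarrow> nat) \<Rightarrow> real" where
  "gen c \<alpha> f \<eta> = (\<Sum>x\<in>UNIV. real (\<eta> x) * (\<Sum>y\<in>UNIV. c x y * (\<alpha> y + real (\<eta> y)) *
        (f (move_particle \<eta> x y) - f \<eta>)))"

definition annih :: "(('v::finite \<Rightarrow> nat) \<Rightarrow> real) \<Rightarrow> ('v \<Rightarrow> nat) \<Rightarrow> real" where
  "annih g \<eta> = (\<Sum>x\<in>UNIV. real (\<eta> x) * g (remove_particle \<eta> x))"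

end

theory Submission
  imports Defs
begin

(* Split the generator into its jump part and the diagonal part -(exit rate) * f eta.  In the jump
   part of a L g a particle is first removed at x and then one jumps from z to y; in L a g the jump
   comes first.  For y <> x both orders reach the same configuration with the same weight
   eta_x (eta_z - [z = x]) c_zy (alpha_y + eta_y), so only the terms with y = x survive.  Together
   with the change of the exit rate caused by removing a particle at x, the commutator collapses to
   sum_x eta_x g(eta - delta_x) sum_z (c_zx - c_xz) eta_z, which vanishes for symmetric c.  Hence
   the identity holds for every configuration. *)

lemma remove_particle_apply: "remove_particle \<eta> x w = \<eta> w - (if w = x then 1 else 0)"
  by (simp add: remove_particle_def)

lemma move_particle_apply:
  "move_particle \<eta> z y w = \<eta> w - (if w = z then 1 else 0) + (if w = y then 1 else 0)"
  by (simp add: move_particle_def)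

lemma move_remove_particle_commute:
  assumes "y \<noteq> x"
  shows "move_particle (remove_particle \<eta> x) z y = remove_particle (move_particle \<eta> z y) x"
  using assms by (auto simp: fun_eq_iff move_particle_def remove_particle_def)

lemma remove_move_particle_cancel: "remove_particle (move_particle \<eta> z x) x = remove_particle \<eta> z"
  by (auto simp: fun_eq_iff move_particle_def remove_particle_def)

lemma move_remove_particle_cancel:
  assumes "(if z = x then 1 else 0) < \<eta> x"
  shows "move_particle (remove_particle \<eta> x) z x = remove_particle \<eta> z"
  using assms by (auto simp: fun_eq_iff move_particle_def remove_particle_def)

lemma of_nat_remove_particle:
  assumes "\<eta> x \<noteq> 0"
  shows "real (remove_particle \<eta> x w) = real (\<eta> w) - (if w = x then 1 else 0)"
  using assms by (simp add: remove_particle_apply of_nat_diff)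

definition jump_rate :: "('v \<Rightarrow> 'v \<Rightarrow> real) \<Rightarrow> ('v \<Rightarrow> real) \<Rightarrow> ('v \<Rightarrow> nat) \<Rightarrow> 'v \<Rightarrow> 'v \<Rightarrow> real" where
  "jump_rate c \<alpha> \<xi> z y = real (\<xi> z) * c z y * (\<alpha> y + real (\<xi> y))"

definition exit_rate :: "('v::finite \<Rightarrow> 'v \<Rightarrow> real) \<Rightarrow> ('v \<Rightarrow> real) \<Rightarrow> ('v \<Rightarrow> nat) \<Rightarrow> real" where
  "exit_rate c \<alpha> \<xi> = (\<Sum>z\<in>UNIV. \<Sum>y\<in>UNIV. jump_rate c \<alpha> \<xi> z y)"

lemma gen_eq_jumps_minus_exit:
  "gen c \<alpha> f \<xi> = (\<Sum>z\<in>UNIV. \<Sum>y\<in>UNIV. jump_rate c \<alpha> \<xi> z y * f (move_particle \<xi> z y))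
                   - exit_rate c \<alpha> \<xi> * f \<xi>"
  unfolding gen_def exit_rate_def jump_rate_def
  by (simp add: sum_distrib_left sum_distrib_right sum_subtractf[symmetric] algebra_simps)

lemma jump_term_commutator:
  "real (\<eta> x) * jump_rate c \<alpha> (remove_particle \<eta> x) z y * g (move_particle (remove_particle \<eta> x) z y)
     - jump_rate c \<alpha> \<eta> z y * real (move_particle \<eta> z y x) * g (remove_particle (move_particle \<eta> z y) x)
   = (if y = x then c z x * real (\<eta> z) * ((if z = x then 1 else 0) - 2 * real (\<eta> x) - \<alpha> x)
        * g (remove_particle \<eta> z) else 0)"
proof (cases "y = x")
  case False
  have "real (\<eta> x) * real (remove_particle \<eta> x z) = real (\<eta> z) * real (move_particle \<eta> z y x)"
    using False by (simp add: remove_particle_apply move_particle_apply)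
  with False show ?thesis
    by (simp add: jump_rate_def move_remove_particle_commute remove_particle_apply)
next
  case True
  show ?thesis
  proof (cases "\<eta> x = 0")
    case True
    with \<open>y = x\<close> show ?thesis
      by (cases "z = x") (simp_all add: jump_rate_def remove_move_particle_cancel move_particle_apply)
  next
    case False
    have moved: "real (move_particle \<eta> z x x) = real (\<eta> x) - (if x = z then 1 else 0) + 1"
      using False by (cases "x = z") (simp_all add: move_particle_apply of_nat_diff)
    have jump_target:
      "real (\<eta> x) * jump_rate c \<alpha> (remove_particle \<eta> x) z x * g (move_particle (remove_particle \<eta> x) z x)
        = real (\<eta> x) * jump_rate c \<alpha> (remove_particle \<eta> x) z x * g (remove_particle \<eta> z)"
    proof (cases "(if z = x then 1 else 0) < \<eta> x")
      case True
      then show ?thesis by (simp add: move_remove_particle_cancel)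
    next
      case False
      with \<open>\<eta> x \<noteq> 0\<close> have "remove_particle \<eta> x z = 0"
        by (auto simp: remove_particle_apply split: if_splits)
      then show ?thesis by (simp add: jump_rate_def)
    qed
    show ?thesis
      unfolding \<open>y = x\<close> jump_target remove_move_particle_cancel
      by (simp add: jump_rate_def of_nat_remove_particle[of \<eta> x, OF False] moved algebra_simps)
  qed
qed

lemma jump_part_commutator:
  "(\<Sum>x\<in>UNIV. real (\<eta> x) * (\<Sum>z\<in>UNIV. \<Sum>y\<in>UNIV.
        jump_rate c \<alpha> (remove_particle \<eta> x) z y * g (move_particle (remove_particle \<eta> x) z y)))
   - (\<Sum>z\<in>UNIV. \<Sum>y\<in>UNIV. jump_rate c \<alpha> \<eta> z y * annih g (move_particle \<eta> z y))
   = (\<Sum>x\<in>UNIV. real (\<eta> x) * g (remove_particle \<eta> x) *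
        (\<Sum>z\<in>UNIV. c x z * ((if z = x then 1 else 0) - 2 * real (\<eta> z) - \<alpha> z)))"
  (is "?removed - ?moved = _")
proof -
  have "?moved = (\<Sum>z\<in>UNIV. \<Sum>y\<in>UNIV. \<Sum>x\<in>UNIV. jump_rate c \<alpha> \<eta> z y
                   * real (move_particle \<eta> z y x) * g (remove_particle (move_particle \<eta> z y) x))"
    unfolding annih_def by (simp add: sum_distrib_left mult.assoc)
  also have "\<dots> = (\<Sum>z\<in>UNIV. \<Sum>x\<in>UNIV. \<Sum>y\<in>UNIV. jump_rate c \<alpha> \<eta> z y
                   * real (move_particle \<eta> z y x) * g (remove_particle (move_particle \<eta> z y) x))"
    by (rule sum.cong[OF refl], rule sum.swap)
  also have "\<dots> = (\<Sum>x\<in>UNIV. \<Sum>z\<in>UNIV. \<Sum>y\<in>UNIV. jump_rate c \<alpha> \<eta> z y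
                   * real (move_particle \<eta> z y x) * g (remove_particle (move_particle \<eta> z y) x))"
    by (rule sum.swap)
  finally have "?removed - ?moved = (\<Sum>x\<in>UNIV. \<Sum>z\<in>UNIV. \<Sum>y\<in>UNIV.
      real (\<eta> x) * jump_rate c \<alpha> (remove_particle \<eta> x) z y * g (move_particle (remove_particle \<eta> x) z y)
      - jump_rate c \<alpha> \<eta> z y * real (move_particle \<eta> z y x) * g (remove_particle (move_particle \<eta> z y) x))"
    by (simp add: sum_distrib_left sum_subtractf mult.assoc)
  also have "\<dots> = (\<Sum>x\<in>UNIV. \<Sum>z\<in>UNIV. c z x * real (\<eta> z)
      * ((if z = x then 1 else 0) - 2 * real (\<eta> x) - \<alpha> x) * g (remove_particle \<eta> z))"
    by (simp add: jump_term_commutator)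
  also have "\<dots> = (\<Sum>z\<in>UNIV. \<Sum>x\<in>UNIV. c z x * real (\<eta> z)
      * ((if z = x then 1 else 0) - 2 * real (\<eta> x) - \<alpha> x) * g (remove_particle \<eta> z))"
    by (rule sum.swap)
  also have "\<dots> = (\<Sum>z\<in>UNIV. real (\<eta> z) * g (remove_particle \<eta> z) *
      (\<Sum>x\<in>UNIV. c z x * ((if x = z then 1 else 0) - 2 * real (\<eta> x) - \<alpha> x)))"
    unfolding sum_distrib_left by (intro sum.cong refl) (auto simp: algebra_simps)
  finally show ?thesis .
qed

lemma exit_rate_remove_particle:
  "real (\<eta> x) * (exit_rate c \<alpha> \<eta> - exit_rate c \<alpha> (remove_particle \<eta> x))
   = real (\<eta> x) * ((\<Sum>y\<in>UNIV. c x y * (\<alpha> y + real (\<eta> y))) + (\<Sum>z\<in>UNIV. c z x * real (\<eta> z)) - c x x)"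
proof (cases "\<eta> x = 0")
  case False
  have rate_change: "jump_rate c \<alpha> \<eta> z y - jump_rate c \<alpha> (remove_particle \<eta> x) z y
      = (if z = x then c x y * (\<alpha> y + real (\<eta> y)) else 0)
        + (if y = x then c z x * real (\<eta> z) - (if z = x then c x x else 0) else 0)" for z y
    using False by (simp add: jump_rate_def of_nat_remove_particle algebra_simps)
  have "exit_rate c \<alpha> \<eta> - exit_rate c \<alpha> (remove_particle \<eta> x)
      = (\<Sum>y\<in>UNIV. c x y * (\<alpha> y + real (\<eta> y))) + (\<Sum>z\<in>UNIV. c z x * real (\<eta> z)) - c x x"
    unfolding exit_rate_def sum_subtractf[symmetric] rate_change
    by (simp add: sum.distrib sum_subtractf) (subst sum.swap, simp)
  then show ?thesis by simp
qed simp

lemma annih_gen_commutator: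
  "annih (gen c \<alpha> g) \<eta> - gen c \<alpha> (annih g) \<eta>
   = (\<Sum>x\<in>UNIV. real (\<eta> x) * g (remove_particle \<eta> x) * (\<Sum>z\<in>UNIV. (c z x - c x z) * real (\<eta> z)))"
proof -
  let ?jumps = "\<lambda>f \<xi>. \<Sum>z\<in>UNIV. \<Sum>y\<in>UNIV. jump_rate c \<alpha> \<xi> z y * f (move_particle \<xi> z y)"
  have annih_gen: "annih (gen c \<alpha> g) \<eta> = (\<Sum>x\<in>UNIV. real (\<eta> x) * ?jumps g (remove_particle \<eta> x))
      - (\<Sum>x\<in>UNIV. real (\<eta> x) * exit_rate c \<alpha> (remove_particle \<eta> x) * g (remove_particle \<eta> x))"
    by (simp add: annih_def gen_eq_jumps_minus_exit right_diff_distrib sum_subtractf mult.assoc)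
  have gen_annih: "gen c \<alpha> (annih g) \<eta>
      = ?jumps (annih g) \<eta> - (\<Sum>x\<in>UNIV. real (\<eta> x) * exit_rate c \<alpha> \<eta> * g (remove_particle \<eta> x))"
    by (simp add: gen_eq_jumps_minus_exit annih_def[of g \<eta>] sum_distrib_left algebra_simps)
  have exits: "(\<Sum>x\<in>UNIV. g (remove_particle \<eta> x) *
        (real (\<eta> x) * (exit_rate c \<alpha> \<eta> - exit_rate c \<alpha> (remove_particle \<eta> x))))
      = (\<Sum>x\<in>UNIV. real (\<eta> x) * exit_rate c \<alpha> \<eta> * g (remove_particle \<eta> x))
        - (\<Sum>x\<in>UNIV. real (\<eta> x) * exit_rate c \<alpha> (remove_particle \<eta> x) * g (remove_particle \<eta> x))"
    by (simp add: sum_subtractf[symmetric] algebra_simps)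
  have "annih (gen c \<alpha> g) \<eta> - gen c \<alpha> (annih g) \<eta>
      = ((\<Sum>x\<in>UNIV. real (\<eta> x) * ?jumps g (remove_particle \<eta> x)) - ?jumps (annih g) \<eta>)
        + (\<Sum>x\<in>UNIV. g (remove_particle \<eta> x) *
            (real (\<eta> x) * (exit_rate c \<alpha> \<eta> - exit_rate c \<alpha> (remove_particle \<eta> x))))"
    unfolding annih_gen gen_annih exits by simp
  also have "\<dots> = (\<Sum>x\<in>UNIV. real (\<eta> x) * g (remove_particle \<eta> x) *
      ((\<Sum>z\<in>UNIV. c x z * ((if z = x then 1 else 0) - 2 * real (\<eta> z) - \<alpha> z))
       + ((\<Sum>y\<in>UNIV. c x y * (\<alpha> y + real (\<eta> y))) + (\<Sum>z\<in>UNIV. c z x * real (\<eta> z)) - c x x)))"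
    unfolding jump_part_commutator exit_rate_remove_particle sum.distrib[symmetric]
    by (intro sum.cong refl) (simp only: distrib_left mult_ac)
  also have "\<dots> = (\<Sum>x\<in>UNIV. real (\<eta> x) * g (remove_particle \<eta> x) * (\<Sum>z\<in>UNIV. (c z x - c x z) * real (\<eta> z)))"
    by (simp add: algebra_simps sum.distrib sum_subtractf if_distrib[of "(*) _"] sum_distrib_left)
  finally show ?thesis .
qed

corollary annih_gen_commute:
  assumes "\<And>x y. c x y = c y x"
  shows "annih (gen c \<alpha> g) \<eta> = gen c \<alpha> (annih g) \<eta>"
  using annih_gen_commutator[of c \<alpha> g \<eta>] by (simp add: assms)

theorem propositionA5:
  fixes c :: "'v::finite \<Rightarrow> 'v \<Rightarrow> real" and \<alpha> :: "'v \<Rightarrow> real" and k :: nat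
    and g :: "('v \<Rightarrow> nat) \<Rightarrow> real"
  assumes "\<And>x y. c x y = c y x" and "\<And>x y. c x y \<ge> 0" and "\<And>x. \<alpha> x > 0"
    and "k \<ge> 2"
  shows "\<forall>\<eta>\<in>Xi k. annih (gen c \<alpha> g) \<eta> = gen c \<alpha> (annih g) \<eta>"
  using annih_gen_commute[of c] assms(1) by blast

end
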